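(* Let $H_1,H_2$ be Hilbert spaces, let $C\in\mathcal{B}(H_2,H_1)$ be a contraction, and let $T=\begin{bmatrix}I_{H_1} & C\\ C^* & I_{H_2}\end{bmatrix}$ on $H_1\oplus H_2$. Then $T\in\mathcal{AM}(H_1\oplus H_2)$ if and only if $C$ has finite rank.
   Context: Throughout, Hilbert spaces are complex, separable and infinite dimensional; $\mathcal{B}(H_1,H_2)$ denotes bounded linear operators. For $S\in\mathcal{B}(H_1,H_2)$ the minimum modulus is $m(S)=\inf\{\|Sx\|:\|x\|=1\}$; $S$ is minimum attaining if $\|Sx\|=m(S)$ for some unit vector $x$. $S$ is absolutely minimum attaining, written $S\in\mathcal{AM}(H_1,H_2)$, if for every nonzero closed subspace $M\subseteq H_1$ the restriction $S|_M$ is minimum attaining. *)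

theory Defs
  imports "HOL-Analysis.Analysis"
begin

class complex_vector = real_vector +
  fixes scaleC :: "complex \<Rightarrow> 'a \<Rightarrow> 'a"
  assumes scaleC_add_right: "scaleC a (x + y) = scaleC a x + scaleC a y"
    and scaleC_add_left: "scaleC (a + b) x = scaleC a x + scaleC b x"
    and scaleC_scaleC: "scaleC a (scaleC b x) = scaleC (a * b) x"
    and scaleC_one: "scaleC 1 x = x"
    and scaleR_scaleC: "scaleR r x = scaleC (complex_of_real r) x"

class complex_normed_vector = complex_vector + real_normed_vector +
  assumes norm_scaleC: "norm (scaleC a x) = cmod a * norm x"

class complex_inner = complex_normed_vector +
  fixes cinner :: "'a \<Rightarrow> 'a \<Rightarrow> complex"
  assumes cinner_commute: "cinner x y = cnj (cinner y x)"
    and cinner_add_left: "cinner (x + y) z = cinner x z + cinner y z"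
    and cinner_scaleC_left: "cinner (scaleC r x) y = cnj r * cinner x y"
    and cinner_pos: "Im (cinner x x) = 0 \<and> Re (cinner x x) \<ge> 0"
    and cinner_eq_zero_iff: "cinner x x = 0 \<longleftrightarrow> x = 0"
    and norm_eq_sqrt_cinner: "norm x = sqrt (Re (cinner x x))"

class chilbert_space = complex_inner + complete_space

text \<open>The direct sum \<open>H1 \<oplus> H2\<close> is the product type; its norm (from HOL-Analysis)
  is \<open>sqrt (norm x ^ 2 + norm y ^ 2)\<close>, the Hilbert direct-sum norm.\<close>
instantiation prod :: (complex_vector, complex_vector) complex_vector
begin
definition scaleC_prod_def: "scaleC a p = (scaleC a (fst p), scaleC a (snd p))"
instance
  by standard (auto simp: scaleC_prod_def scaleC_add_right scaleC_add_left
      scaleC_scaleC scaleC_one scaleR_scaleC scaleR_prod_def)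
end

definition csubspace :: "'a::complex_vector set \<Rightarrow> bool" where
  "csubspace M \<longleftrightarrow> 0 \<in> M \<and> (\<forall>x\<in>M. \<forall>y\<in>M. x + y \<in> M) \<and> (\<forall>c. \<forall>x\<in>M. scaleC c x \<in> M)"

definition closed_csubspace :: "'a::{complex_vector, topological_space} set \<Rightarrow> bool" where
  "closed_csubspace M \<longleftrightarrow> csubspace M \<and> closed M"

definition cspan :: "'a::complex_vector set \<Rightarrow> 'a set" where
  "cspan S = {sum (\<lambda>v. scaleC (c v) v) F | F c. finite F \<and> F \<subseteq> S}"

definition clinear :: "('a::complex_vector \<Rightarrow> 'b::complex_vector) \<Rightarrow> bool" where
  "clinear f \<longleftrightarrow> (\<forall>x y. f (x + y) = f x + f y) \<and> (\<forall>c x. f (scaleC c x) = scaleC c (f x))"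

definition bounded_clinear :: "('a::complex_normed_vector \<Rightarrow> 'b::complex_normed_vector) \<Rightarrow> bool" where
  "bounded_clinear f \<longleftrightarrow> clinear f \<and> (\<exists>K. \<forall>x. norm (f x) \<le> norm x * K)"

definition contraction :: "('a::complex_normed_vector \<Rightarrow> 'b::complex_normed_vector) \<Rightarrow> bool" where
  "contraction f \<longleftrightarrow> (\<forall>x. norm (f x) \<le> norm x)"

definition cadjoint :: "('a::complex_inner \<Rightarrow> 'b::complex_inner) \<Rightarrow> 'b \<Rightarrow> 'a" where
  "cadjoint C = (\<lambda>y. THE z. \<forall>x. cinner z x = cinner y (C x))"

definition finite_rank :: "('a \<Rightarrow> 'b::complex_vector) \<Rightarrow> bool" where
  "finite_rank C \<longleftrightarrow> (\<exists>F. finite F \<and> range C \<subseteq> cspan F)"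

definition separable_space :: "'a::topological_space itself \<Rightarrow> bool" where
  "separable_space _ \<longleftrightarrow> (\<exists>D::'a set. countable D \<and> closure D = UNIV)"

definition infinite_dimensional :: "'a::complex_vector itself \<Rightarrow> bool" where
  "infinite_dimensional _ \<longleftrightarrow> \<not> (\<exists>F::'a set. finite F \<and> cspan F = UNIV)"

definition min_modulus_on :: "'a::real_normed_vector set \<Rightarrow> ('a \<Rightarrow> 'b::real_normed_vector) \<Rightarrow> real" where
  "min_modulus_on M S = Inf {norm (S x) | x. x \<in> M \<and> norm x = 1}"

definition min_attaining_on :: "'a::real_normed_vector set \<Rightarrow> ('a \<Rightarrow> 'b::real_normed_vector) \<Rightarrow> bool" where
  "min_attaining_on M S \<longleftrightarrow> (\<exists>x\<in>M. norm x = 1 \<and> norm (S x) = min_modulus_on M S)"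

definition abs_min_attaining :: "('a::{complex_vector, real_normed_vector} \<Rightarrow> 'b::real_normed_vector) \<Rightarrow> bool" where
  "abs_min_attaining S \<longleftrightarrow>
     (\<forall>M. closed_csubspace M \<and> M \<noteq> {0} \<longrightarrow> min_attaining_on M S)"

end

theory Submission
  imports Defs
begin

(* Write T = I + K with the self-adjoint operator K = [0, C; C^*, 0], which has finite rank
   iff C has.

   If C has finite rank and M is a closed subspace, let N = M \<inter> ker K and let W be the
   orthogonal complement of N in M. Then T is the identity on N and maps W orthogonally to N,
   and W is finite dimensional because K is injective on it. So the minimum modulus of T on M is
   the smaller of 1 (when N is nonzero) and the minimum of ||T w|| over the compact unit sphere
   of W, and it is attained.

   If C has infinite rank, choose unit vectors y_n with C y_n nonzero and y_n orthogonal to y_m,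
   C^*C y_m and (C^*C)^2 y_m for m < n, and then t_n (intermediate value theorem) such that
   v_n = (t_n C y_n, y_n) satisfies ||T v_n||^2 = tau_n ||v_n||^2 with tau_n > 1 and tau_n -> 1.
   The v_n are mutually orthogonal and so are the T v_n. On their closed span, ||T x|| >= ||x||
   and the infimum of ||T x|| over unit vectors is 1. A unit vector x with ||T x|| = ||x|| would
   give <T x, T z> = <x, z> for all z in the span, hence (tau_n - 1) <x, v_n> = 0 for all n and
   x = 0. *)

section \<open>Complex inner product spaces\<close>

interpretation cvs: vector_space "scaleC :: complex \<Rightarrow> 'a \<Rightarrow> 'a::complex_vector"
  by unfold_locales (simp_all add: scaleC_add_right scaleC_add_left scaleC_scaleC scaleC_one)

lemma cspan_eq_span: "cspan = cvs.span"
  by (simp add: fun_eq_iff cspan_def cvs.span_explicit)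

lemma csubspace_eq_subspace: "csubspace = cvs.subspace"
  by (simp add: fun_eq_iff csubspace_def cvs.subspace_def)

lemmas cspan_base = cvs.span_base[folded cspan_eq_span]
  and cspan_add = cvs.span_add[folded cspan_eq_span]
  and cspan_diff = cvs.span_diff[folded cspan_eq_span]
  and cspan_scale = cvs.span_scale[folded cspan_eq_span]
  and cspan_sum = cvs.span_sum[folded cspan_eq_span]
  and cspan_mono = cvs.span_mono[folded cspan_eq_span]
  and cspan_span = cvs.span_span[folded cspan_eq_span]
  and cspan_minimal = cvs.span_minimal[folded cspan_eq_span csubspace_eq_subspace]
  and csubspace_cspan = cvs.subspace_span[folded cspan_eq_span csubspace_eq_subspace]
  and csubspace_diff = cvs.subspace_diff[folded csubspace_eq_subspace]

lemma cspan_subset_cspan: "A \<subseteq> cspan B \<Longrightarrow> cspan A \<subseteq> cspan B"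
  by (metis cspan_mono cspan_span)

lemma csubspace_scaleR: "csubspace M \<Longrightarrow> x \<in> M \<Longrightarrow> scaleR r x \<in> M"
  by (simp add: csubspace_def scaleR_scaleC)

lemma csubspace_sgn: "csubspace M \<Longrightarrow> (x::'a::complex_normed_vector) \<in> M \<Longrightarrow> sgn x \<in> M"
  unfolding sgn_div_norm by (rule csubspace_scaleR)

lemma csubspace_has_unit_vector:
  fixes M :: "'a::complex_normed_vector set"
  assumes "csubspace M" "M \<noteq> {0}"
  obtains x where "x \<in> M" "norm x = 1"
proof -
  obtain x where "x \<in> M" "x \<noteq> 0" using assms by (auto simp: csubspace_def)
  then show thesis using that[of "sgn x"] csubspace_sgn[OF assms(1)] by (simp add: norm_sgn)
qed

lemma clinear_add: "clinear L \<Longrightarrow> L (x + y) = L x + L y"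
  and clinear_scaleC: "clinear L \<Longrightarrow> L (scaleC c x) = scaleC c (L x)"
  by (simp_all add: clinear_def)

lemma clinear_scaleR: "clinear L \<Longrightarrow> L (scaleR r x) = scaleR r (L x)"
  by (simp add: scaleR_scaleC clinear_scaleC)

lemma clinear_zero: "clinear L \<Longrightarrow> L 0 = 0"
  using clinear_scaleC[of L 0 0] by simp

lemma clinear_diff: "clinear L \<Longrightarrow> L (x - y) = L x - L y"
  using clinear_add[of L "x - y" y] by (simp add: algebra_simps)

lemma clinear_sum: "clinear L \<Longrightarrow> L (sum f A) = (\<Sum>a\<in>A. L (f a))"
  by (induction A rule: infinite_finite_induct) (auto simp: clinear_add clinear_zero)

lemma clinear_cspan_image:
  assumes "clinear L" "x \<in> cspan S"
  shows "L x \<in> cspan (L ` S)"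
proof -
  from assms(2) obtain F c where x: "x = (\<Sum>v\<in>F. scaleC (c v) v)" "F \<subseteq> S"
    unfolding cspan_def by blast
  have "L x = (\<Sum>v\<in>F. scaleC (c v) (L v))"
    using assms(1) by (simp add: x clinear_sum clinear_scaleC)
  also have "\<dots> \<in> cspan (L ` S)"
    using x(2) by (intro cspan_sum cspan_scale cspan_base) auto
  finally show ?thesis .
qed

lemma bounded_clinear_imp_bounded_linear: "bounded_clinear f \<Longrightarrow> bounded_linear f"
  unfolding bounded_clinear_def clinear_def
  by (metis bounded_linear_intro scaleR_scaleC)

lemma bounded_bilinear_scaleC:
  "bounded_bilinear (scaleC :: complex \<Rightarrow> 'a::complex_normed_vector \<Rightarrow> 'a)"
proof
  fix a a' :: complex and b b' :: 'a and r :: real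
  show "scaleC (a + a') b = scaleC a b + scaleC a' b" by (rule scaleC_add_left)
  show "scaleC a (b + b') = scaleC a b + scaleC a b'" by (rule scaleC_add_right)
  show "scaleC (scaleR r a) b = scaleR r (scaleC a b)"
    by (simp add: scaleR_scaleC scaleC_scaleC scaleR_conv_of_real)
  show "scaleC a (scaleR r b) = scaleR r (scaleC a b)"
    by (simp add: scaleR_scaleC scaleC_scaleC mult.commute)
  show "\<exists>K. \<forall>a b::'a. norm (scaleC (a::complex) b) \<le> norm a * norm b * K"
    by (rule exI[of _ 1]) (simp add: norm_scaleC)
qed

lemmas tendsto_scaleC[tendsto_intros] = bounded_bilinear.tendsto[OF bounded_bilinear_scaleC]

lemma closed_csubspace_closure:
  fixes S :: "'a::complex_normed_vector set"
  assumes "csubspace S"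
  shows "closed_csubspace (closure S)"
proof -
  have S: "0 \<in> S" "\<And>x y. x \<in> S \<Longrightarrow> y \<in> S \<Longrightarrow> x + y \<in> S" "\<And>c x. x \<in> S \<Longrightarrow> scaleC c x \<in> S"
    using assms by (auto simp: csubspace_def)
  have "x + y \<in> closure S" if "x \<in> closure S" "y \<in> closure S" for x y
  proof -
    from that obtain xs ys where "\<And>n. xs n \<in> S" "xs \<longlonglongrightarrow> x" "\<And>n. ys n \<in> S" "ys \<longlonglongrightarrow> y"
      unfolding closure_sequential by metis
    then show ?thesis unfolding closure_sequential
      by (intro exI[of _ "\<lambda>n. xs n + ys n"]) (auto intro!: tendsto_intros S)
  qed
  moreover have "scaleC c x \<in> closure S" if "x \<in> closure S" for x c
  proof -
    from that obtain xs where "\<And>n. xs n \<in> S" "xs \<longlonglongrightarrow> x"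
      unfolding closure_sequential by metis
    then show ?thesis unfolding closure_sequential
      by (intro exI[of _ "\<lambda>n. scaleC c (xs n)"]) (auto intro!: tendsto_intros S)
  qed
  ultimately show ?thesis
    using S(1) closure_subset unfolding closed_csubspace_def csubspace_def by blast
qed

lemma cnj_cinner: "cnj (cinner x y) = cinner y x"
  using cinner_commute[of y x] by simp

lemma cinner_add_right: "cinner x (y + z) = cinner x y + cinner x z"
  by (metis cinner_add_left cnj_cinner complex_cnj_add)

lemma cinner_scaleC_right: "cinner x (scaleC c y) = c * cinner x y"
  by (metis cinner_scaleC_left cnj_cinner complex_cnj_cnj complex_cnj_mult)

lemma cinner_zero_left [simp]: "cinner 0 x = 0"
  using cinner_scaleC_left[of 0 x x] by simp

lemma cinner_zero_right [simp]: "cinner x 0 = 0"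
  using cinner_scaleC_right[of x 0 x] by simp

lemma cinner_diff_left: "cinner (x - y) z = cinner x z - cinner y z"
  by (metis add_diff_cancel_right' cinner_add_left diff_add_cancel)

lemma cinner_diff_right: "cinner x (y - z) = cinner x y - cinner x z"
  by (metis add_diff_cancel_right' cinner_add_right diff_add_cancel)

lemma cinner_sum_left: "cinner (sum f A) y = (\<Sum>a\<in>A. cinner (f a) y)"
  by (induction A rule: infinite_finite_induct) (auto simp: cinner_add_left)

lemma cinner_sum_right: "cinner y (sum f A) = (\<Sum>a\<in>A. cinner y (f a))"
  by (induction A rule: infinite_finite_induct) (auto simp: cinner_add_right)

lemma cinner_scaleR_left: "cinner (scaleR r x) y = of_real r * cinner x y"
  by (simp add: scaleR_scaleC cinner_scaleC_left)

lemma cinner_scaleR_right: "cinner x (scaleR r y) = of_real r * cinner x y"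
  by (simp add: scaleR_scaleC cinner_scaleC_right)

lemma cinner_self: "cinner x x = complex_of_real ((norm x)\<^sup>2)"
  using cinner_pos[of x] by (simp add: norm_eq_sqrt_cinner complex_eq_iff)

lemma Re_cinner_self: "Re (cinner x x) = (norm x)\<^sup>2"
  using cinner_pos[of x] by (simp add: norm_eq_sqrt_cinner)

declare cinner_eq_zero_iff [simp]

lemma cinner_ext: "(\<And>z. cinner a z = cinner b z) \<Longrightarrow> a = b"
  by (metis cinner_diff_left cinner_eq_zero_iff right_minus_eq)

lemma norm_add_sq: "(norm (x + y))\<^sup>2 = (norm x)\<^sup>2 + (norm y)\<^sup>2 + 2 * Re (cinner x y)"
proof -
  have "cinner (x + y) (x + y) = cinner x x + cinner y y + (cinner x y + cnj (cinner x y))"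
    by (simp add: cinner_add_left cinner_add_right cnj_cinner)
  then have "Re (cinner (x + y) (x + y)) = Re (cinner x x) + Re (cinner y y) + 2 * Re (cinner x y)"
    by simp
  then show ?thesis by (simp only: Re_cinner_self)
qed

lemma norm_diff_sq: "(norm (x - y))\<^sup>2 = (norm x)\<^sup>2 + (norm y)\<^sup>2 - 2 * Re (cinner x y)"
  using norm_add_sq[of x "- y"] cinner_diff_right[of x 0 y] by simp

lemma pythagoras: "cinner x y = 0 \<Longrightarrow> (norm (x + y))\<^sup>2 = (norm x)\<^sup>2 + (norm y)\<^sup>2"
  by (simp add: norm_add_sq)

lemma cnj_mult_self: "cnj z * z = complex_of_real ((cmod z)\<^sup>2)"
  by (metis complex_norm_square mult.commute)

lemma cauchy_schwarz: "cmod (cinner x y) \<le> norm x * norm y"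
proof (cases "y = 0")
  case False
  define s where "s = cinner y x / complex_of_real ((norm y)\<^sup>2)"
  have "s * cinner x y = complex_of_real ((cmod (cinner x y))\<^sup>2 / (norm y)\<^sup>2)"
    by (simp add: s_def cnj_mult_self flip: cnj_cinner[of x y])
  moreover have "cmod s = cmod (cinner x y) / (norm y)\<^sup>2"
    by (simp add: s_def norm_divide norm_power flip: cnj_cinner[of x y])
  then have "(cmod s)\<^sup>2 * (norm y)\<^sup>2 = (cmod (cinner x y))\<^sup>2 / (norm y)\<^sup>2"
    using False by (simp add: power2_eq_square)
  moreover have "0 \<le> (norm (x - scaleC s y))\<^sup>2" by simp
  ultimately have "(cmod (cinner x y))\<^sup>2 / (norm y)\<^sup>2 \<le> (norm x)\<^sup>2"
    by (simp add: norm_diff_sq norm_scaleC power_mult_distrib cinner_scaleC_right)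
  then have "(cmod (cinner x y))\<^sup>2 \<le> (norm x * norm y)\<^sup>2"
    using False by (simp add: pos_divide_le_eq power_mult_distrib)
  then show ?thesis by (rule power2_le_imp_le) simp
qed simp

lemma bounded_bilinear_cinner: "bounded_bilinear (cinner :: 'a::complex_inner \<Rightarrow> 'a \<Rightarrow> complex)"
proof
  fix a a' b b' :: 'a and r :: real
  show "cinner (a + a') b = cinner a b + cinner a' b" by (rule cinner_add_left)
  show "cinner a (b + b') = cinner a b + cinner a b'" by (rule cinner_add_right)
  show "cinner (scaleR r a) b = scaleR r (cinner a b)"
    by (simp add: cinner_scaleR_left scaleR_conv_of_real)
  show "cinner a (scaleR r b) = scaleR r (cinner a b)"
    by (simp add: cinner_scaleR_right scaleR_conv_of_real)
  show "\<exists>K. \<forall>a b::'a. norm (cinner a b) \<le> norm a * norm b * K"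
    by (rule exI[of _ 1]) (simp add: cauchy_schwarz)
qed

lemmas continuous_on_cinner [continuous_intros] =
  bounded_bilinear.continuous_on[OF bounded_bilinear_cinner]

lemma cinner_cspan_left:
  assumes "\<And>g. g \<in> G \<Longrightarrow> cinner g y = 0" "v \<in> cspan G"
  shows "cinner v y = 0"
  using assms by (auto simp: cspan_def cinner_sum_left cinner_scaleC_left subset_iff
      intro!: sum.neutral)

lemma cinner_clinear_cspan:
  assumes L: "clinear L" and W: "\<And>w. w \<in> W \<Longrightarrow> cinner (L w) a = cinner w b" and x: "x \<in> cspan W"
  shows "cinner (L x) a = cinner x b"
proof -
  obtain F c where x: "x = (\<Sum>v\<in>F. scaleC (c v) v)" "F \<subseteq> W"
    using x unfolding cspan_def by blast
  have "cinner (L x) a = (\<Sum>v\<in>F. cnj (c v) * cinner (L v) a)"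
    using L by (simp add: x clinear_sum clinear_scaleC cinner_sum_left cinner_scaleC_left)
  also have "\<dots> = (\<Sum>v\<in>F. cnj (c v) * cinner v b)"
    using x(2) W by (intro sum.cong) auto
  also have "\<dots> = cinner x b"
    by (simp add: x cinner_sum_left cinner_scaleC_left)
  finally show ?thesis .
qed

lemma eq_zero_if_orthogonal_closure_cspan:
  assumes x: "x \<in> closure (cspan S)" and orthogonal: "\<And>s. s \<in> S \<Longrightarrow> cinner s x = 0"
  shows "x = 0"
proof -
  have "cspan S \<subseteq> {z. cinner z x = 0}"
    using cinner_cspan_left[of S x] orthogonal by blast
  moreover have "closed {z. cinner z x = 0}"
    by (rule closed_Collect_eq[OF continuous_on_cinner[OF continuous_on_id continuous_on_const]
          continuous_on_const])
  ultimately have "cinner x x = 0"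
    using closure_minimal x by blast
  then show ?thesis by simp
qed

lemma norm_sum_orthogonal:
  assumes "finite F" "\<And>u w. u \<in> F \<Longrightarrow> w \<in> F \<Longrightarrow> u \<noteq> w \<Longrightarrow> cinner (f u) (f w) = 0"
  shows "(norm (sum f F))\<^sup>2 = (\<Sum>u\<in>F. (norm (f u))\<^sup>2)"
  using assms
proof (induction F rule: finite_induct)
  case (insert a F)
  have "cinner (f a) (sum f F) = 0"
    using insert by (auto simp: cinner_sum_right intro!: sum.neutral)
  then show ?case using insert by (simp add: pythagoras)
qed simp

instance prod :: (complex_normed_vector, complex_normed_vector) complex_normed_vector
  by standard (simp add: scaleC_prod_def norm_prod_def norm_scaleC power_mult_distrib
      real_sqrt_mult flip: distrib_left)

instantiation prod :: (complex_inner, complex_inner) complex_inner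
begin
definition cinner_prod_def: "cinner x y = cinner (fst x) (fst y) + cinner (snd x) (snd y)"
instance
proof
  fix x y z :: "'a \<times> 'b" and r :: complex
  show "cinner x y = cnj (cinner y x)"
    by (simp add: cinner_prod_def cnj_cinner)
  show "cinner (x + y) z = cinner x z + cinner y z"
    by (simp add: cinner_prod_def cinner_add_left)
  show "cinner (scaleC r x) y = cnj r * cinner x y"
    by (simp add: cinner_prod_def cinner_scaleC_left scaleC_prod_def distrib_left)
  show "Im (cinner x x) = 0 \<and> 0 \<le> Re (cinner x x)"
    by (simp add: cinner_prod_def cinner_pos)
  show "norm x = sqrt (Re (cinner x x))"
    by (simp add: cinner_prod_def Re_cinner_self norm_prod_def)
  have "Im (cinner x x) = 0" by (simp add: cinner_prod_def cinner_pos)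
  then have "cinner x x = 0 \<longleftrightarrow> (norm (fst x))\<^sup>2 + (norm (snd x))\<^sup>2 = 0"
    by (simp add: complex_eq_iff cinner_prod_def Re_cinner_self)
  then show "cinner x x = 0 \<longleftrightarrow> x = 0"
    by (simp add: add_nonneg_eq_0_iff prod_eq_iff)
qed
end

instance prod :: (chilbert_space, chilbert_space) chilbert_space ..

lemma cinner_Pair: "cinner (a, b) (c, d) = cinner a c + cinner b d"
  by (simp add: cinner_prod_def)

lemma scaleC_Pair: "scaleC c (x, y) = (scaleC c x, scaleC c y)"
  by (simp add: scaleC_prod_def)

lemma quadratic_nonneg_imp_linear_coeff_zero:
  fixes \<beta> :: complex
  assumes D: "D \<ge> 0" and nonneg: "\<And>s. 0 \<le> (cmod s)\<^sup>2 * D + 2 * Re (s * \<beta>)"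
  shows "\<beta> = 0"
proof -
  define t where "t = 1 / (D + 1)"
  have t: "t > 0" "t * D < 1" using D by (simp_all add: t_def)
  have "Re (- (complex_of_real t * cnj \<beta>) * \<beta>) = - t * (cmod \<beta>)\<^sup>2"
    using cmod_power2[of \<beta>] by (simp add: power2_eq_square algebra_simps)
  then have "0 \<le> t\<^sup>2 * (cmod \<beta>)\<^sup>2 * D - 2 * t * (cmod \<beta>)\<^sup>2"
    using nonneg[of "- (complex_of_real t * cnj \<beta>)"] t
    by (simp add: norm_mult power_mult_distrib)
  then have "0 \<le> t * ((cmod \<beta>)\<^sup>2 * (t * D - 2))"
    by (simp add: power2_eq_square algebra_simps)
  then have "(cmod \<beta>)\<^sup>2 * (2 - t * D) \<le> 0"
    using t by (simp add: zero_le_mult_iff algebra_simps)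
  then show ?thesis
    using t by (simp add: mult_le_0_iff)
qed

text \<open>If \<open>T\<close> does not shrink any vector of \<open>M\<close>, then \<open>\<parallel>T z\<parallel>\<^sup>2 - \<parallel>z\<parallel>\<^sup>2\<close> is a positive
  semidefinite form on \<open>M\<close>, and a vector on which it vanishes lies in its kernel.\<close>
lemma cinner_eq_if_norm_eq_on_expanding:
  assumes T: "clinear T" and M: "csubspace M"
    and expanding: "\<And>z. z \<in> M \<Longrightarrow> norm z \<le> norm (T z)"
    and x: "x \<in> M" "norm (T x) = norm x" and z: "z \<in> M"
  shows "cinner (T x) (T z) = cinner x z"
proof -
  have "0 \<le> (cmod s)\<^sup>2 * ((norm (T z))\<^sup>2 - (norm z)\<^sup>2)
            + 2 * Re (s * (cinner (T x) (T z) - cinner x z))" for s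
  proof -
    have "x + scaleC s z \<in> M" using M x z by (simp add: csubspace_def)
    then have "norm (x + scaleC s z) \<le> norm (T (x + scaleC s z))"
      by (rule expanding)
    also have "T (x + scaleC s z) = T x + scaleC s (T z)"
      by (simp add: clinear_add[OF T] clinear_scaleC[OF T])
    finally have "(norm (x + scaleC s z))\<^sup>2 \<le> (norm (T x + scaleC s (T z)))\<^sup>2"
      by (simp add: power_mono)
    then show ?thesis
      using x(2) by (simp add: norm_add_sq norm_scaleC power_mult_distrib cinner_scaleC_right
          algebra_simps)
  qed
  moreover have "0 \<le> (norm (T z))\<^sup>2 - (norm z)\<^sup>2"
    using expanding[OF z] by (simp add: power_mono)
  ultimately show ?thesis
    using quadratic_nonneg_imp_linear_coeff_zero by fastforce
qed

section \<open>Orthogonal projections and adjoints\<close>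

definition orthonormal :: "'a::complex_inner set \<Rightarrow> bool" where
  "orthonormal E \<longleftrightarrow> (\<forall>e\<in>E. norm e = 1) \<and> (\<forall>e\<in>E. \<forall>f\<in>E. e \<noteq> f \<longrightarrow> cinner e f = 0)"

definition proj :: "'a::complex_inner set \<Rightarrow> 'a \<Rightarrow> 'a" where
  "proj E x = (\<Sum>e\<in>E. scaleC (cinner e x) e)"

lemma orthonormal_subset: "orthonormal E \<Longrightarrow> F \<subseteq> E \<Longrightarrow> orthonormal F"
  by (auto simp: orthonormal_def)

lemma cinner_orthonormal_sum:
  assumes "finite E" "orthonormal E" "e \<in> E"
  shows "cinner e (\<Sum>f\<in>E. scaleC (c f) f) = c e"
proof -
  have "cinner e (\<Sum>f\<in>E. scaleC (c f) f) = c e * cinner e e + (\<Sum>f\<in>E-{e}. c f * cinner e f)"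
    using assms by (simp add: cinner_sum_right cinner_scaleC_right cinner_add_right sum.remove)
  also have "(\<Sum>f\<in>E-{e}. c f * cinner e f) = 0"
    using assms(2,3) unfolding orthonormal_def by (intro sum.neutral) auto
  finally show ?thesis
    using assms(2,3) by (simp add: orthonormal_def cinner_self)
qed

lemma cinner_diff_proj:
  assumes "finite E" "orthonormal E" "e \<in> E"
  shows "cinner e (x - proj E x) = 0"
  using cinner_orthonormal_sum[OF assms] by (simp add: proj_def cinner_diff_right)

lemma proj_in_cspan: "proj E x \<in> cspan E"
  unfolding proj_def by (intro cspan_sum cspan_scale cspan_base)

lemma cinner_cspan_diff_proj:
  assumes "finite E" "orthonormal E" "v \<in> cspan E"
  shows "cinner v (x - proj E x) = 0"
  using cinner_cspan_left[of E "x - proj E x" v] cinner_diff_proj[OF assms(1,2)] assms(3) by blast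

lemma proj_cspan_id:
  assumes "finite E" "orthonormal E" "x \<in> cspan E"
  shows "proj E x = x"
  using cinner_cspan_diff_proj[OF assms(1,2)] assms(3) proj_in_cspan[of E x]
  by (metis cspan_diff cinner_eq_zero_iff right_minus_eq)

lemma orthonormal_insert_sgn_residual:
  assumes E: "finite E" "orthonormal E" and w: "w \<notin> cspan E"
  defines "e \<equiv> sgn (w - proj E w)"
  shows "orthonormal (insert e E)" "e \<notin> E" "w \<in> cspan (insert e E)"
proof -
  let ?r = "w - proj E w"
  have r: "?r \<noteq> 0" using w proj_in_cspan[of E w] by auto
  have norm_e: "norm e = 1" using r by (simp add: e_def norm_sgn)
  have orth: "cinner f e = 0" "cinner e f = 0" if "f \<in> E" for f
    using cinner_diff_proj[OF E that, of w] cinner_commute[of e f]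
    by (simp_all add: e_def sgn_div_norm cinner_scaleR_right)
  show "orthonormal (insert e E)"
    using E(2) norm_e orth unfolding orthonormal_def by auto
  show "e \<notin> E" using orth norm_e by (metis cinner_eq_zero_iff norm_zero zero_neq_one)
  have "w = proj E w + scaleR (norm ?r) e"
    using r by (simp add: e_def sgn_div_norm)
  moreover have "proj E w \<in> cspan (insert e E)"
    using proj_in_cspan cspan_mono[of E "insert e E"] by blast
  ultimately show "w \<in> cspan (insert e E)"
    by (metis cspan_add cspan_base cspan_scale insertI1 scaleR_scaleC)
qed

lemma gram_schmidt:
  assumes "finite G"
  obtains E where "finite E" "orthonormal E" "G \<subseteq> cspan E"
proof -
  from assms have "\<exists>E. finite E \<and> orthonormal E \<and> G \<subseteq> cspan E"
  proof (induction G rule: finite_induct)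
    case empty
    show ?case by (rule exI[of _ "{}"]) (simp add: orthonormal_def)
  next
    case (insert g G)
    then obtain E where E: "finite E" "orthonormal E" "G \<subseteq> cspan E" by blast
    show ?case
    proof (cases "g \<in> cspan E")
      case True
      then show ?thesis using E by blast
    next
      case False
      let ?E = "insert (sgn (g - proj E g)) E"
      have "G \<subseteq> cspan ?E" using E(3) cspan_mono[of E ?E] by blast
      then show ?thesis
        using E(1) orthonormal_insert_sgn_residual[OF E(1,2) False] by blast
    qed
  qed
  then show thesis using that by blast
qed

lemma parallelogram_law:
  "(norm (a - b))\<^sup>2 + (norm (a + b))\<^sup>2 = 2 * (norm a)\<^sup>2 + 2 * (norm (b::'a::complex_inner))\<^sup>2"
  using norm_add_sq[of a b] norm_diff_sq[of a b] by simp

lemma LIMSEQ_inverse_real_plus_one: "(\<lambda>k. 1 / (real k + 1)) \<longlonglongrightarrow> 0"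
  using LIMSEQ_inverse_real_of_nat by (simp add: inverse_eq_divide add.commute)

lemma Cauchy_if_dist_sq_bounded:
  fixes a :: "nat \<Rightarrow> 'a::metric_space"
  assumes dist: "\<And>j k. (dist (a j) (a k))\<^sup>2 \<le> e j + e k" and e: "e \<longlonglongrightarrow> 0"
  shows "Cauchy a"
proof (rule metric_CauchyI)
  fix \<epsilon> :: real assume "\<epsilon> > 0"
  then have "\<epsilon>\<^sup>2 / 2 > 0" by simp
  then obtain N where N: "\<forall>n\<ge>N. norm (e n - 0) < \<epsilon>\<^sup>2 / 2"
    using e unfolding LIMSEQ_iff by blast
  show "\<exists>N. \<forall>m\<ge>N. \<forall>n\<ge>N. dist (a m) (a n) < \<epsilon>"
  proof (intro exI allI impI)
    fix m n assume "m \<ge> N" "n \<ge> N"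
    then have "e m < \<epsilon>\<^sup>2 / 2" "e n < \<epsilon>\<^sup>2 / 2"
      using N by auto
    then have "(dist (a m) (a n))\<^sup>2 < \<epsilon>\<^sup>2"
      using dist[of m n] by linarith
    then show "dist (a m) (a n) < \<epsilon>"
      using \<open>\<epsilon> > 0\<close> by (simp add: power_less_imp_less_base)
  qed
qed

lemma dist_sq_le_if_near_minimal:
  fixes x :: "'a::complex_inner"
  assumes N: "csubspace N" and ab: "a \<in> N" "b \<in> N"
    and d: "0 \<le> d" "\<And>n. n \<in> N \<Longrightarrow> d \<le> norm (x - n)"
  shows "(dist a b)\<^sup>2 \<le> 2 * ((norm (x - a))\<^sup>2 - d\<^sup>2) + 2 * ((norm (x - b))\<^sup>2 - d\<^sup>2)"
proof -
  have "scaleC (1/2) (a + b) \<in> N" using N ab by (simp add: csubspace_def)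
  then have "d \<le> norm (x - scaleC (1/2) (a + b))" by (rule d(2))
  then have "2 * d \<le> norm (2 *\<^sub>R x - 2 *\<^sub>R scaleC (1/2) (a + b))"
    by (simp flip: scaleR_diff_right)
  also have "2 *\<^sub>R scaleC (1/2) (a + b) = a + b"
    by (simp add: scaleR_scaleC scaleC_scaleC scaleC_one)
  finally have "2 * d \<le> norm ((x - a) + (x - b))"
    by (simp add: scaleR_2 algebra_simps)
  then have "(2 * d)\<^sup>2 \<le> (norm ((x - a) + (x - b)))\<^sup>2"
    using d(1) by (intro power_mono) auto
  then show ?thesis
    using parallelogram_law[of "x - a" "x - b"]
    by (simp add: dist_norm norm_minus_commute power_mult_distrib)
qed

lemma closest_point_exists:
  fixes x :: "'a::chilbert_space"
  assumes N: "closed_csubspace N"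
  shows "\<exists>p\<in>N. \<forall>n\<in>N. norm (x - p) \<le> norm (x - n)"
proof -
  have N0: "0 \<in> N" using N by (simp add: closed_csubspace_def csubspace_def)
  define d where "d = Inf ((\<lambda>n. norm (x - n)) ` N)"
  have d_le: "d \<le> norm (x - n)" if "n \<in> N" for n
    unfolding d_def using that by (intro cInf_lower) (auto intro!: bdd_belowI[of _ 0])
  have d0: "0 \<le> d"
    unfolding d_def using N0 by (intro cInf_greatest) auto
  have "\<exists>n\<in>N. (norm (x - n))\<^sup>2 < d\<^sup>2 + 1 / (real k + 1)" for k
  proof -
    have "d < sqrt (d\<^sup>2 + 1 / (real k + 1))"
      by (intro real_less_rsqrt) simp
    then have "\<exists>s\<in>(\<lambda>n. norm (x - n)) ` N. s < sqrt (d\<^sup>2 + 1 / (real k + 1))"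
      using N0 unfolding d_def by (intro cInf_lessD) auto
    then obtain n where "n \<in> N" "norm (x - n) < sqrt (d\<^sup>2 + 1 / (real k + 1))"
      by blast
    moreover have "0 \<le> d\<^sup>2 + 1 / (real k + 1)" by simp
    ultimately show ?thesis
      by (metis norm_ge_zero power_strict_mono real_sqrt_pow2 zero_less_numeral)
  qed
  then obtain a where a: "\<And>k. a k \<in> N" "\<And>k. (norm (x - a k))\<^sup>2 < d\<^sup>2 + 1 / (real k + 1)"
    by metis
  have "(dist (a j) (a k))\<^sup>2 \<le> 2 / (real j + 1) + 2 / (real k + 1)" for j k
    using dist_sq_le_if_near_minimal[OF _ a(1)[of j] a(1)[of k] d0 d_le] N a(2)[of j] a(2)[of k]
    by (simp add: closed_csubspace_def)
  moreover have "(\<lambda>k. 2 / (real k + 1)) \<longlonglongrightarrow> 0"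
    using tendsto_mult_right_zero[OF LIMSEQ_inverse_real_plus_one, of 2] by simp
  ultimately have "Cauchy a" by (rule Cauchy_if_dist_sq_bounded)
  then obtain p where p: "a \<longlonglongrightarrow> p" using Cauchy_convergent_iff convergent_def by blast
  have "p \<in> N" using closed_sequentially N a(1) p by (auto simp: closed_csubspace_def)
  moreover have "(norm (x - p))\<^sup>2 \<le> d\<^sup>2"
  proof (rule LIMSEQ_le)
    show "(\<lambda>k. (norm (x - a k))\<^sup>2) \<longlonglongrightarrow> (norm (x - p))\<^sup>2" by (intro tendsto_intros p)
    show "(\<lambda>k. d\<^sup>2 + 1 / (real k + 1)) \<longlonglongrightarrow> d\<^sup>2"
      using tendsto_add[OF tendsto_const LIMSEQ_inverse_real_plus_one, of "d\<^sup>2"] by simp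
    show "\<exists>N. \<forall>k\<ge>N. (norm (x - a k))\<^sup>2 \<le> d\<^sup>2 + 1 / (real k + 1)"
      using a(2) less_imp_le by blast
  qed
  then have "norm (x - p) \<le> d" using d0 by (rule power2_le_imp_le)
  ultimately show ?thesis using d_le by force
qed

lemma closest_point_orthogonal:
  assumes N: "csubspace N" and p: "p \<in> N" and closest: "\<And>n. n \<in> N \<Longrightarrow> norm (x - p) \<le> norm (x - n)"
    and n: "n \<in> N"
  shows "cinner n (x - p) = 0"
proof -
  have "0 \<le> (cmod s)\<^sup>2 * (norm n)\<^sup>2 + 2 * Re (s * cinner (x - p) n)" for s
  proof -
    have "p - scaleC s n \<in> N" using N p n by (simp add: csubspace_diff csubspace_def)
    then have "norm (x - p) \<le> norm ((x - p) + scaleC s n)"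
      using closest[of "p - scaleC s n"] by (simp add: algebra_simps)
    then have "(norm (x - p))\<^sup>2 \<le> (norm ((x - p) + scaleC s n))\<^sup>2"
      by (simp add: power_mono)
    then show ?thesis by (simp add: norm_add_sq norm_scaleC power_mult_distrib cinner_scaleC_right)
  qed
  then have "cinner (x - p) n = 0" by (intro quadratic_nonneg_imp_linear_coeff_zero[of "(norm n)\<^sup>2"]) auto
  then show ?thesis by (metis cnj_cinner complex_cnj_zero)
qed

lemma projection_exists:
  fixes x :: "'a::chilbert_space"
  assumes "closed_csubspace N"
  shows "\<exists>p\<in>N. \<forall>n\<in>N. cinner n (x - p) = 0"
  using closest_point_exists[OF assms, of x] closest_point_orthogonal assms
  unfolding closed_csubspace_def by metis

definition orthogonal_complement_in :: "'a::complex_inner set \<Rightarrow> 'a set \<Rightarrow> 'a set" where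
  "orthogonal_complement_in M N = {w \<in> M. \<forall>n\<in>N. cinner n w = 0}"

lemma closed_csubspace_orthogonal_complement_in:
  "closed_csubspace M \<Longrightarrow> closed_csubspace (orthogonal_complement_in M N)"
  unfolding orthogonal_complement_in_def closed_csubspace_def csubspace_def Collect_conj_eq
  by (auto simp: cinner_add_right cinner_scaleC_right Collect_ball_eq
      intro!: closed_Int closed_INT closed_Collect_eq continuous_on_cinner continuous_on_const
      continuous_on_id)

lemma orthogonal_decomposition:
  fixes u :: "'a::chilbert_space"
  assumes N: "closed_csubspace N" "N \<subseteq> M" and M: "csubspace M" and u: "u \<in> M"
  shows "\<exists>n\<in>N. \<exists>w\<in>orthogonal_complement_in M N. u = n + w"
proof -
  obtain p where p: "p \<in> N" "\<And>n. n \<in> N \<Longrightarrow> cinner n (u - p) = 0"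
    using projection_exists[OF N(1)] by blast
  moreover have "u - p \<in> M"
    using M N(2) p(1) u by (simp add: csubspace_diff subset_iff)
  ultimately have "u - p \<in> orthogonal_complement_in M N"
    by (simp add: orthogonal_complement_in_def)
  with p(1) show ?thesis by (intro bexI[of _ p] bexI[of _ "u - p"]) auto
qed

lemma riesz_representation:
  fixes f :: "'a::chilbert_space \<Rightarrow> complex"
  assumes add: "\<And>x y. f (x + y) = f x + f y" and scale: "\<And>c x. f (scaleC c x) = c * f x"
    and bounded: "\<And>x. cmod (f x) \<le> norm x * K"
  shows "\<exists>z. \<forall>x. f x = cinner z x"
proof (cases "\<forall>x. f x = 0")
  case False
  then obtain x0 where x0: "f x0 \<noteq> 0" by blast
  interpret f: bounded_linear f
    using add bounded by (intro bounded_linear_intro) (auto simp: scaleR_scaleC scaleR_conv_of_real scale)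
  define N where "N = {x. f x = 0}"
  have "closed_csubspace N"
    unfolding N_def closed_csubspace_def csubspace_def
    by (auto simp: add scale intro!: closed_Collect_eq continuous_on_const f.continuous_on)
  then obtain p where p: "p \<in> N" "\<And>n. n \<in> N \<Longrightarrow> cinner n (x0 - p) = 0"
    using projection_exists by blast
  define u where "u = x0 - p"
  have fu: "f u \<noteq> 0" using p(1) x0 by (simp add: u_def N_def f.diff)
  then have u: "u \<noteq> 0" by auto
  have "f x = cinner (scaleC (cnj (f u) / complex_of_real ((norm u)\<^sup>2)) u) x" for x
  proof -
    have "f (x - scaleC (f x / f u) u) = 0" using fu by (simp add: f.diff scale)
    then have "cinner (x - scaleC (f x / f u) u) u = 0" using p(2) by (simp add: N_def u_def)
    then have "cinner x u = cnj (f x / f u) * complex_of_real ((norm u)\<^sup>2)"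
      by (simp add: cinner_diff_left cinner_scaleC_left cinner_self)
    then have "cinner u x = f x / f u * complex_of_real ((norm u)\<^sup>2)"
      by (metis cnj_cinner complex_cnj_cnj complex_cnj_mult complex_cnj_complex_of_real)
    then show ?thesis using u fu by (simp add: cinner_scaleC_left field_simps)
  qed
  then show ?thesis by blast
qed (auto intro: exI[of _ 0])

lemma cinner_cadjoint:
  fixes C :: "'b::chilbert_space \<Rightarrow> 'a::chilbert_space"
  assumes C: "bounded_clinear C"
  shows "cinner (cadjoint C y) x = cinner y (C x)"
proof -
  obtain K where add: "\<And>x y. C (x + y) = C x + C y"
    and scale: "\<And>c x. C (scaleC c x) = scaleC c (C x)" and bounded: "\<And>x. norm (C x) \<le> norm x * K"
    using C unfolding bounded_clinear_def clinear_def by blast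
  have "cmod (cinner y (C x)) \<le> norm x * (norm y * K)" for x
  proof -
    have "cmod (cinner y (C x)) \<le> norm y * norm (C x)" by (rule cauchy_schwarz)
    also have "\<dots> \<le> norm y * (norm x * K)" by (intro mult_left_mono bounded) simp
    finally show ?thesis by (simp add: ac_simps)
  qed
  then have "\<exists>z. \<forall>x. cinner y (C x) = cinner z x"
    by (intro riesz_representation) (simp_all add: add scale cinner_add_right cinner_scaleC_right)
  then obtain z where z: "\<And>x. cinner y (C x) = cinner z x"
    by blast
  have "cadjoint C y = z"
    unfolding cadjoint_def
  proof (rule the_equality)
    show "\<forall>x. cinner z x = cinner y (C x)" using z by simp
    show "z' = z" if "\<forall>x. cinner z' x = cinner y (C x)" for z'
      using that z by (intro cinner_ext) simp
  qed
  then show ?thesis using z by simp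
qed

lemma cinner_cadjoint_right:
  fixes C :: "'b::chilbert_space \<Rightarrow> 'a::chilbert_space"
  assumes "bounded_clinear C"
  shows "cinner x (cadjoint C y) = cinner (C x) y"
  by (metis assms cinner_cadjoint cnj_cinner)

lemma clinear_cadjoint:
  fixes C :: "'b::chilbert_space \<Rightarrow> 'a::chilbert_space"
  assumes "bounded_clinear C"
  shows "clinear (cadjoint C)"
  unfolding clinear_def
proof (intro conjI allI)
  fix y1 y2
  show "cadjoint C (y1 + y2) = cadjoint C y1 + cadjoint C y2"
    by (rule cinner_ext) (simp add: cinner_cadjoint[OF assms] cinner_add_left cinner_add_right)
next
  fix c y
  show "cadjoint C (scaleC c y) = scaleC c (cadjoint C y)"
    by (rule cinner_ext) (simp add: cinner_cadjoint[OF assms] cinner_scaleC_left)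
qed

lemma norm_cadjoint_le:
  fixes C :: "'b::chilbert_space \<Rightarrow> 'a::chilbert_space"
  assumes C: "bounded_clinear C" and bound: "\<And>x. norm (C x) \<le> norm x * K" and "0 \<le> K"
  shows "norm (cadjoint C y) \<le> norm y * K"
proof (cases "cadjoint C y = 0")
  case False
  let ?z = "cadjoint C y"
  have "norm ?z * norm ?z = Re (cinner y (C ?z))"
    by (simp add: cinner_cadjoint[OF C, symmetric] Re_cinner_self power2_eq_square)
  also have "\<dots> \<le> norm y * norm (C ?z)"
    using complex_Re_le_cmod cauchy_schwarz order_trans by blast
  also have "\<dots> \<le> norm ?z * (norm y * K)"
    using mult_left_mono[OF bound[of ?z], of "norm y"] by (simp add: ac_simps)
  finally show ?thesis using False by simp
qed (simp add: \<open>0 \<le> K\<close>)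

lemma bounded_clinear_cadjoint:
  fixes C :: "'b::chilbert_space \<Rightarrow> 'a::chilbert_space"
  assumes C: "bounded_clinear C"
  shows "bounded_clinear (cadjoint C)"
proof -
  obtain K where "\<And>x. norm (C x) \<le> norm x * K"
    using C unfolding bounded_clinear_def by blast
  then have "norm (C x) \<le> norm x * max K 0" for x
    by (meson max.cobounded1 mult_left_mono norm_ge_zero order_trans)
  then show ?thesis
    using norm_cadjoint_le[OF C] clinear_cadjoint[OF C] unfolding bounded_clinear_def
    by (metis max.cobounded2)
qed

lemma contraction_cadjoint:
  fixes C :: "'b::chilbert_space \<Rightarrow> 'a::chilbert_space"
  assumes "bounded_clinear C" "contraction C"
  shows "contraction (cadjoint C)"
  using norm_cadjoint_le[OF assms(1), of 1] assms(2) by (simp add: contraction_def)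

lemma finite_rank_cadjoint:
  fixes C :: "'b::chilbert_space \<Rightarrow> 'a::chilbert_space"
  assumes C: "bounded_clinear C" and "finite_rank C"
  shows "finite_rank (cadjoint C)"
proof -
  obtain F where "finite F" "range C \<subseteq> cspan F"
    using assms(2) by (auto simp: finite_rank_def)
  moreover obtain E where E: "finite E" "orthonormal E" "F \<subseteq> cspan E"
    using gram_schmidt[OF \<open>finite F\<close>] by blast
  ultimately have range_C: "range C \<subseteq> cspan E"
    using cspan_subset_cspan by blast
  have "cadjoint C x \<in> cspan (cadjoint C ` E)" for x
  proof -
    have "cadjoint C (x - proj E x) = 0"
    proof (rule cinner_ext)
      fix z
      have "cinner (C z) (x - proj E x) = 0"
        using range_C by (blast intro: cinner_cspan_diff_proj[OF E(1,2)])
      then show "cinner (cadjoint C (x - proj E x)) z = cinner 0 z"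
        by (metis cinner_cadjoint[OF C] cinner_zero_left cnj_cinner complex_cnj_zero)
    qed
    then have "cadjoint C x = cadjoint C (proj E x)"
      by (simp add: clinear_diff[OF clinear_cadjoint[OF C]])
    then show ?thesis
      using clinear_cspan_image[OF clinear_cadjoint[OF C] proj_in_cspan] by metis
  qed
  then show ?thesis
    using E(1) unfolding finite_rank_def by blast
qed

section \<open>Minimum modulus\<close>

lemma min_modulus_on_le:
  assumes "u \<in> M" "norm u = 1"
  shows "min_modulus_on M S \<le> norm (S u)"
  unfolding min_modulus_on_def using assms by (intro cInf_lower) (auto intro!: bdd_belowI[of _ 0])

lemma min_attaining_onI:
  assumes "x \<in> M" "norm x = 1" "\<And>u. u \<in> M \<Longrightarrow> norm u = 1 \<Longrightarrow> norm (S x) \<le> norm (S u)"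
  shows "min_attaining_on M S"
proof -
  have "min_modulus_on M S = norm (S x)"
    unfolding min_modulus_on_def using assms by (intro cInf_eq_minimum) auto
  then show ?thesis unfolding min_attaining_on_def using assms(1,2) by auto
qed

lemma norm_ge_min_modulus_on:
  fixes T :: "'a::complex_normed_vector \<Rightarrow> 'b::complex_normed_vector"
  assumes T: "clinear T" and W: "csubspace W" "w \<in> W"
  shows "(min_modulus_on W T * norm w)\<^sup>2 \<le> (norm (T w))\<^sup>2"
proof (cases "w = 0")
  case False
  have unit: "sgn w \<in> W" "norm (sgn w) = 1"
    using W False by (simp_all add: csubspace_sgn norm_sgn)
  then have "0 \<le> min_modulus_on W T"
    unfolding min_modulus_on_def by (intro cInf_greatest) auto
  have "min_modulus_on W T \<le> norm (T (sgn w))"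
    using unit by (rule min_modulus_on_le)
  also have "norm (T (sgn w)) = norm (T w) / norm w"
    using False by (simp add: sgn_div_norm clinear_scaleR[OF T] divide_inverse_commute)
  finally have "min_modulus_on W T * norm w \<le> norm (T w)"
    using False by (simp add: pos_le_divide_eq)
  then show ?thesis
    using \<open>0 \<le> min_modulus_on W T\<close> by (intro power_mono) simp_all
qed (simp add: clinear_zero[OF T])

lemma bounded_coordinates_convergent_subseq:
  fixes c :: "nat \<Rightarrow> 'e \<Rightarrow> complex"
  assumes "finite E" "\<And>k e. e \<in> E \<Longrightarrow> cmod (c k e) \<le> B"
  shows "\<exists>r. strict_mono r \<and> (\<forall>e\<in>E. convergent (\<lambda>k. c (r k) e))"
  using assms
proof (induction E arbitrary: c rule: finite_induct)
  case empty
  then show ?case by (intro exI[of _ id]) (auto simp: strict_mono_def)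
next
  case (insert a E)
  then obtain r where r: "strict_mono r" "\<forall>e\<in>E. convergent (\<lambda>k. c (r k) e)" by blast
  have "bounded (range (\<lambda>k. c (r k) a))"
    using insert.prems by (auto simp: bounded_iff)
  then obtain l s where s: "strict_mono s" "((\<lambda>k. c (r k) a) \<circ> s) \<longlonglongrightarrow> l"
    using bounded_imp_convergent_subsequence by blast
  have "convergent (\<lambda>k. c (r (s k)) e)" if e: "e \<in> insert a E" for e
  proof (cases "e = a")
    case True
    then show ?thesis using s(2) by (auto simp: convergent_def o_def)
  next
    case False
    then obtain m where "(\<lambda>k. c (r k) e) \<longlonglongrightarrow> m" using r(2) e False by (auto simp: convergent_def)
    then have "((\<lambda>k. c (r k) e) \<circ> s) \<longlonglongrightarrow> m" using s(1) by (rule LIMSEQ_subseq_LIMSEQ)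
    then show ?thesis by (auto simp: convergent_def o_def)
  qed
  moreover have "strict_mono (r \<circ> s)" using r(1) s(1) by (rule strict_mono_o)
  ultimately show ?case by (intro exI[of _ "r \<circ> s"]) (auto simp: o_def)
qed

text \<open>Compactness of the unit sphere of \<open>W\<close>, by passing to a subsequence along which all
  coordinates with respect to \<open>E\<close> converge.\<close>
lemma min_attaining_on_finite_span:
  fixes T :: "'a::complex_inner \<Rightarrow> 'b::real_normed_vector"
  assumes E: "finite E" "orthonormal E" and W: "W \<subseteq> cspan E" "closed W"
    and unit: "\<exists>w\<in>W. norm w = 1" and T: "continuous_on UNIV T"
  shows "min_attaining_on W T"
proof -
  let ?\<mu> = "min_modulus_on W T"
  have "\<exists>u. u \<in> W \<and> norm u = 1 \<and> norm (T u) < ?\<mu> + 1 / (real k + 1)" for k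
  proof -
    have "Inf {norm (T x) |x. x \<in> W \<and> norm x = 1} < ?\<mu> + 1 / (real k + 1)"
      by (simp add: min_modulus_on_def add_pos_nonneg)
    then show ?thesis using unit by (subst (asm) cInf_less_iff) (auto intro!: bdd_belowI[of _ 0])
  qed
  then obtain u where u: "\<And>k. u k \<in> W" "\<And>k. norm (u k) = 1"
    "\<And>k. norm (T (u k)) < ?\<mu> + 1 / (real k + 1)"
    by metis
  have "cmod (cinner e (u k)) \<le> 1" if "e \<in> E" for e k
    using cauchy_schwarz[of e "u k"] u(2)[of k] E(2) that by (simp add: orthonormal_def)
  then obtain r where r: "strict_mono r" "\<forall>e\<in>E. convergent (\<lambda>k. cinner e (u (r k)))"
    using bounded_coordinates_convergent_subseq[OF E(1), of "\<lambda>k e. cinner e (u k)"] by blast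
  define w where "w = (\<Sum>e\<in>E. scaleC (lim (\<lambda>k. cinner e (u (r k)))) e)"
  have "u (r k) = (\<Sum>e\<in>E. scaleC (cinner e (u (r k))) e)" for k
    using proj_cspan_id[OF E, of "u (r k)"] W(1) u(1)[of "r k"] by (auto simp: proj_def)
  moreover have "(\<lambda>k. \<Sum>e\<in>E. scaleC (cinner e (u (r k))) e) \<longlonglongrightarrow> w"
    unfolding w_def using r(2)
    by (intro tendsto_sum tendsto_scaleC tendsto_const) (simp add: convergent_LIMSEQ_iff)
  ultimately have lim_w: "(\<lambda>k. u (r k)) \<longlonglongrightarrow> w" by simp
  have "w \<in> W" using closed_sequentially[OF W(2) _ lim_w] u(1) by blast
  moreover have "norm w = 1"
    using tendsto_norm[OF lim_w] u(2) by (simp add: LIMSEQ_const_iff)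
  moreover have "norm (T w) \<le> ?\<mu>"
  proof (rule LIMSEQ_le)
    show "(\<lambda>k. norm (T (u (r k)))) \<longlonglongrightarrow> norm (T w)"
      using T lim_w by (intro tendsto_norm) (auto intro: continuous_on_tendsto_compose)
    show "(\<lambda>k. ?\<mu> + 1 / (real k + 1)) \<longlonglongrightarrow> ?\<mu>"
      using tendsto_add[OF tendsto_const LIMSEQ_inverse_real_plus_one, of ?\<mu>] by simp
    have "1 / (real (r k) + 1) \<le> 1 / (real k + 1)" for k
      using seq_suble[OF r(1), of k] by (intro divide_left_mono) auto
    then show "\<exists>N. \<forall>k\<ge>N. norm (T (u (r k))) \<le> ?\<mu> + 1 / (real k + 1)"
      using u(3) by (meson add_left_mono less_imp_le order_trans)
  qed
  ultimately show ?thesis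
    using min_modulus_on_le[of _ W T] by (intro min_attaining_onI[of w]) (auto intro: order_trans)
qed

lemma card_orthonormal_le_if_inj_on_subspace:
  fixes K :: "'a::complex_inner \<Rightarrow> 'b::complex_vector"
  assumes K: "clinear K" and G: "finite G" "range K \<subseteq> cspan G"
    and W: "csubspace W" and inj: "\<And>w. w \<in> W \<Longrightarrow> K w = 0 \<Longrightarrow> w = 0"
    and E: "finite E" "orthonormal E" "E \<subseteq> W"
  shows "card E \<le> card G"
proof -
  have inj_E: "inj_on K E"
  proof (rule inj_onI)
    fix a b assume "a \<in> E" "b \<in> E" "K a = K b"
    then show "a = b"
      using inj[of "a - b"] csubspace_diff[OF W] E(3) by (auto simp: clinear_diff[OF K])
  qed
  have "\<not> cvs.dependent (K ` E)"
  proof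
    assume "cvs.dependent (K ` E)"
    then obtain t u where t: "finite t" "t \<subseteq> K ` E" "(\<Sum>v\<in>t. scaleC (u v) v) = 0"
      and nonzero: "\<exists>v\<in>t. u v \<noteq> 0"
      unfolding cvs.dependent_explicit by blast
    define F where "F = {e\<in>E. K e \<in> t}"
    have t_eq: "t = K ` F" and F: "F \<subseteq> E" using t(2) by (auto simp: F_def)
    have "finite F" "orthonormal F" "inj_on K F"
      using finite_subset[OF F E(1)] orthonormal_subset[OF E(2) F] inj_on_subset[OF inj_E F] .
    define s where "s = (\<Sum>e\<in>F. scaleC (u (K e)) e)"
    have "K s = (\<Sum>v\<in>t. scaleC (u v) v)"
      using \<open>inj_on K F\<close> by (simp add: s_def t_eq clinear_sum[OF K] clinear_scaleC[OF K] sum.reindex)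
    moreover have "s \<in> cspan F"
      unfolding s_def by (intro cspan_sum cspan_scale cspan_base)
    then have "s \<in> W"
      using cspan_minimal[of F W] F E(3) W by blast
    ultimately have "s = 0" using inj t(3) by simp
    then have "u (K e) = 0" if "e \<in> F" for e
      using cinner_orthonormal_sum[OF \<open>finite F\<close> \<open>orthonormal F\<close> that, of "\<lambda>e. u (K e)"]
      by (simp add: s_def)
    then show False using nonzero t_eq by auto
  qed
  moreover have "K ` E \<subseteq> cvs.span G" using G(2) by (auto simp: cspan_eq_span)
  ultimately have "card (K ` E) \<le> card G"
    using cvs.independent_span_bound[OF G(1)] by blast
  then show ?thesis using card_image[OF inj_E] by simp
qed

lemma finite_orthonormal_basis_if_inj_on_subspace:
  fixes K :: "'a::complex_inner \<Rightarrow> 'b::complex_vector"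
  assumes K: "clinear K" and G: "finite G" "range K \<subseteq> cspan G"
    and W: "csubspace W" and inj: "\<And>w. w \<in> W \<Longrightarrow> K w = 0 \<Longrightarrow> w = 0"
  obtains E where "finite E" "orthonormal E" "E \<subseteq> W" "W \<subseteq> cspan E"
proof -
  define P where "P E \<longleftrightarrow> finite E \<and> orthonormal E \<and> E \<subseteq> W" for E
  have "P {}" by (simp add: P_def orthonormal_def)
  moreover have "card E < card G + 1" if "P E" for E
    using card_orthonormal_le_if_inj_on_subspace[OF assms] that
    unfolding P_def by (simp add: less_Suc_eq_le)
  ultimately obtain E where E: "P E" and max: "\<And>E'. P E' \<Longrightarrow> card E' \<le> card E"
    using ex_has_greatest_nat[of P "{}" card "card G + 1"] by blast
  have "w \<in> cspan E" if "w \<in> W" for w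
  proof (rule ccontr)
    assume w: "w \<notin> cspan E"
    let ?e = "sgn (w - proj E w)"
    have "proj E w \<in> W"
      using cspan_minimal[OF _ W] proj_in_cspan[of E w] E by (auto simp: P_def)
    then have "?e \<in> W"
      using W that by (simp add: csubspace_diff csubspace_sgn)
    then have "P (insert ?e E)"
      using E orthonormal_insert_sgn_residual[of E w] w by (simp add: P_def)
    then show False
      using max[of "insert ?e E"] E orthonormal_insert_sgn_residual[of E w] w
      by (simp add: P_def)
  qed
  then show thesis using that E by (auto simp: P_def)
qed

section \<open>The block operator\<close>

definition offdiag :: "('b::chilbert_space \<Rightarrow> 'a::chilbert_space) \<Rightarrow> 'a \<times> 'b \<Rightarrow> 'a \<times> 'b" where
  "offdiag C = (\<lambda>(x, y). (C y, cadjoint C x))"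

definition block_op :: "('b::chilbert_space \<Rightarrow> 'a::chilbert_space) \<Rightarrow> 'a \<times> 'b \<Rightarrow> 'a \<times> 'b" where
  "block_op C = (\<lambda>(x, y). (x + C y, cadjoint C x + y))"

lemma offdiag_Pair [simp]: "offdiag C (x, y) = (C y, cadjoint C x)"
  by (simp add: offdiag_def)

lemma block_op_Pair [simp]: "block_op C (x, y) = (x + C y, cadjoint C x + y)"
  by (simp add: block_op_def)

lemma block_op_eq: "block_op C u = u + offdiag C u"
  by (cases u) (simp add: add.commute)

lemma clinear_offdiag:
  fixes C :: "'b::chilbert_space \<Rightarrow> 'a::chilbert_space"
  assumes "bounded_clinear C"
  shows "clinear (offdiag C)"
  using assms clinear_cadjoint[OF assms]
  by (auto simp: clinear_def bounded_clinear_def scaleC_prod_def offdiag_def split: prod.splits)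

lemma bounded_linear_offdiag:
  fixes C :: "'b::chilbert_space \<Rightarrow> 'a::chilbert_space"
  assumes "bounded_clinear C"
  shows "bounded_linear (offdiag C)"
proof -
  have "bounded_linear (\<lambda>u. (C (snd u), cadjoint C (fst u)))"
    using bounded_clinear_imp_bounded_linear[OF assms]
      bounded_clinear_imp_bounded_linear[OF bounded_clinear_cadjoint[OF assms]]
    by (intro bounded_linear_Pair bounded_linear_compose[OF _ bounded_linear_fst]
        bounded_linear_compose[OF _ bounded_linear_snd])
  then show ?thesis by (simp add: offdiag_def case_prod_beta')
qed

lemma clinear_block_op:
  fixes C :: "'b::chilbert_space \<Rightarrow> 'a::chilbert_space"
  assumes "bounded_clinear C"
  shows "clinear (block_op C)"
  using clinear_offdiag[OF assms] unfolding clinear_def block_op_eq[abs_def]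
  by (simp add: scaleC_add_right algebra_simps)

lemma bounded_linear_block_op:
  fixes C :: "'b::chilbert_space \<Rightarrow> 'a::chilbert_space"
  assumes "bounded_clinear C"
  shows "bounded_linear (block_op C)"
  unfolding block_op_eq[abs_def]
  by (intro bounded_linear_add bounded_linear_ident bounded_linear_offdiag[OF assms])

lemma cinner_offdiag:
  fixes C :: "'b::chilbert_space \<Rightarrow> 'a::chilbert_space"
  assumes "bounded_clinear C"
  shows "cinner (offdiag C u) v = cinner u (offdiag C v)"
  by (cases u; cases v)
    (simp add: cinner_Pair cinner_cadjoint[OF assms] cinner_cadjoint_right[OF assms] add.commute)

lemma finite_rank_offdiag:
  fixes C :: "'b::chilbert_space \<Rightarrow> 'a::chilbert_space"
  assumes C: "bounded_clinear C" and "finite_rank C"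
  shows "finite_rank (offdiag C)"
proof -
  obtain F where F: "finite F" "range C \<subseteq> cspan F"
    using assms(2) by (auto simp: finite_rank_def)
  obtain F' where F': "finite F'" "range (cadjoint C) \<subseteq> cspan F'"
    using finite_rank_cadjoint[OF assms] by (auto simp: finite_rank_def)
  have inl: "clinear (\<lambda>x::'a. (x, 0::'b))" and inr: "clinear (\<lambda>y::'b. (0::'a, y))"
    by (simp_all add: clinear_def scaleC_Pair)
  define G where "G = (\<lambda>x. (x, 0)) ` F \<union> (\<lambda>y. (0, y)) ` F'"
  have "(C y, cadjoint C x) \<in> cspan G" for x y
  proof -
    have "(C y, 0) \<in> cspan G" "(0, cadjoint C x) \<in> cspan G"
      using clinear_cspan_image[OF inl, of "C y" F] clinear_cspan_image[OF inr, of "cadjoint C x" F']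
        F(2) F'(2) cspan_mono[of _ G] unfolding G_def by blast+
    from cspan_add[OF this] show ?thesis by simp
  qed
  then show ?thesis
    using F(1) F'(1) unfolding finite_rank_def G_def by (intro exI[of _ G]) (auto simp: G_def)
qed

section \<open>Finite rank\<close>

context
  fixes T :: "'a::complex_normed_vector \<Rightarrow> 'b::complex_normed_vector" and M N W :: "'a set"
  assumes T: "clinear T" and N: "csubspace N" "N \<subseteq> M" and W: "csubspace W" "W \<subseteq> M"
    and decomp: "\<And>u. u \<in> M \<Longrightarrow> \<exists>n\<in>N. \<exists>w\<in>W. u = n + w"
    and norm_sum: "\<And>n w. n \<in> N \<Longrightarrow> w \<in> W \<Longrightarrow> (norm (n + w))\<^sup>2 = (norm n)\<^sup>2 + (norm w)\<^sup>2"
    and norm_T_sum: "\<And>n w. n \<in> N \<Longrightarrow> w \<in> W \<Longrightarrow> (norm (T (n + w)))\<^sup>2 = (norm n)\<^sup>2 + (norm (T w))\<^sup>2"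
begin

lemma norm_image_sq_ge_on_orthogonal_sum:
  assumes u: "u \<in> M" "norm u = 1"
  obtains n w where "n \<in> N" "w \<in> W" "(norm n)\<^sup>2 + (norm w)\<^sup>2 = 1"
    "(norm n)\<^sup>2 + (min_modulus_on W T)\<^sup>2 * (norm w)\<^sup>2 \<le> (norm (T u))\<^sup>2"
proof -
  obtain n w where nw: "n \<in> N" "w \<in> W" "u = n + w" using decomp[OF u(1)] by blast
  have "(norm n)\<^sup>2 + (norm w)\<^sup>2 = 1" using norm_sum[OF nw(1,2)] nw(3) u(2) by simp
  moreover have "(norm (T u))\<^sup>2 = (norm n)\<^sup>2 + (norm (T w))\<^sup>2"
    using norm_T_sum[OF nw(1,2)] nw(3) by simp
  moreover have "(min_modulus_on W T)\<^sup>2 * (norm w)\<^sup>2 \<le> (norm (T w))\<^sup>2"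
    using norm_ge_min_modulus_on[OF T W(1) nw(2)] by (simp add: power_mult_distrib)
  ultimately show thesis using that nw(1,2) by simp
qed

lemma min_attaining_on_orthogonal_sum_if_min_in_W:
  assumes min_W: "min_attaining_on W T" and "N = {0} \<or> min_modulus_on W T \<le> 1"
  shows "min_attaining_on M T"
proof -
  let ?\<mu> = "min_modulus_on W T"
  obtain ws where ws: "ws \<in> W" "norm ws = 1" "norm (T ws) = ?\<mu>"
    using min_W by (auto simp: min_attaining_on_def)
  have "norm (T ws) \<le> norm (T u)" if u: "u \<in> M" "norm u = 1" for u
  proof -
    obtain n w where nw: "n \<in> N" "w \<in> W" "(norm n)\<^sup>2 + (norm w)\<^sup>2 = 1"
      "(norm n)\<^sup>2 + ?\<mu>\<^sup>2 * (norm w)\<^sup>2 \<le> (norm (T u))\<^sup>2"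
      by (rule norm_image_sq_ge_on_orthogonal_sum[OF u])
    have "?\<mu>\<^sup>2 * (norm n)\<^sup>2 \<le> (norm n)\<^sup>2"
    proof (cases "N = {0}")
      case False
      have "0 \<le> ?\<mu>" using norm_ge_zero[of "T ws"] ws(3) by simp
      with False assms(2) have "?\<mu>\<^sup>2 \<le> 1" by (simp add: power_le_one)
      then show ?thesis by (simp add: mult_left_le_one_le)
    qed (use nw(1) in simp)
    moreover have "?\<mu>\<^sup>2 = ?\<mu>\<^sup>2 * (norm n)\<^sup>2 + ?\<mu>\<^sup>2 * (norm w)\<^sup>2"
      using nw(3) by (simp flip: distrib_left)
    ultimately have "?\<mu>\<^sup>2 \<le> (norm (T u))\<^sup>2" using nw(4) by linarith
    then have "(norm (T ws))\<^sup>2 \<le> (norm (T u))\<^sup>2" using ws(3) by simp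
    then show ?thesis by (rule power2_le_imp_le) simp
  qed
  then show ?thesis using ws(1,2) W(2) by (intro min_attaining_onI[of ws]) auto
qed

lemma min_attaining_on_orthogonal_sum_if_min_in_N:
  assumes "N \<noteq> {0}" and "W = {0} \<or> 1 \<le> min_modulus_on W T"
  shows "min_attaining_on M T"
proof -
  let ?\<mu> = "min_modulus_on W T"
  obtain n1 where n1: "n1 \<in> N" "norm n1 = 1"
    using csubspace_has_unit_vector[OF N(1) assms(1)] by blast
  have "(norm (T n1))\<^sup>2 = 1"
    using norm_T_sum[OF n1(1), of 0] n1(2) W(1) by (simp add: clinear_zero[OF T] csubspace_def)
  moreover have "1 \<le> (norm (T u))\<^sup>2" if u: "u \<in> M" "norm u = 1" for u
  proof -
    obtain n w where nw: "n \<in> N" "w \<in> W" "(norm n)\<^sup>2 + (norm w)\<^sup>2 = 1"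
      "(norm n)\<^sup>2 + ?\<mu>\<^sup>2 * (norm w)\<^sup>2 \<le> (norm (T u))\<^sup>2"
      by (rule norm_image_sq_ge_on_orthogonal_sum[OF u])
    have "(norm w)\<^sup>2 \<le> ?\<mu>\<^sup>2 * (norm w)\<^sup>2"
    proof (cases "W = {0}")
      case False
      with assms(2) have "1 \<le> ?\<mu>\<^sup>2" by (simp add: one_le_power)
      then show ?thesis using mult_right_mono[of 1 "?\<mu>\<^sup>2" "(norm w)\<^sup>2"] by simp
    qed (use nw(2) in simp)
    then show ?thesis using nw(3,4) by linarith
  qed
  ultimately have "norm (T n1) \<le> norm (T u)" if "u \<in> M" "norm u = 1" for u
    using that by (metis norm_ge_zero power2_le_imp_le)
  then show ?thesis using n1 N(2) by (intro min_attaining_onI[of n1]) auto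
qed

lemma min_attaining_on_orthogonal_sum:
  assumes "M \<noteq> {0}" and "W \<noteq> {0} \<Longrightarrow> min_attaining_on W T"
  shows "min_attaining_on M T"
proof -
  have "N \<noteq> {0}" if "W = {0}"
  proof -
    obtain u where "u \<in> M" "u \<noteq> 0" using assms(1) N by (auto simp: csubspace_def)
    then show ?thesis using decomp that by fastforce
  qed
  then show ?thesis
    using min_attaining_on_orthogonal_sum_if_min_in_W[OF assms(2)]
      min_attaining_on_orthogonal_sum_if_min_in_N by force
qed

end

lemma closed_csubspace_Int_kernel:
  fixes K :: "'a::complex_normed_vector \<Rightarrow> 'b::complex_normed_vector"
  assumes "closed_csubspace M" "clinear K" "continuous_on UNIV K"
  shows "closed_csubspace (M \<inter> {u. K u = 0})"
proof -
  have "closed {u. K u = 0}" by (rule closed_Collect_eq[OF assms(3) continuous_on_const])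
  then show ?thesis
    using assms(1,2) unfolding closed_csubspace_def csubspace_def
    by (auto simp: clinear_add clinear_scaleC clinear_zero intro: closed_Int)
qed

lemma norm_sq_identity_plus_selfadjoint_split:
  assumes K: "clinear K" and selfadjoint: "\<And>u v. cinner (K u) v = cinner u (K v)"
    and n: "K n = 0" "cinner n w = 0"
  shows "(norm ((n + w) + K (n + w)))\<^sup>2 = (norm n)\<^sup>2 + (norm (w + K w))\<^sup>2"
proof -
  have "(n + w) + K (n + w) = n + (w + K w)" using n(1) by (simp add: clinear_add[OF K])
  moreover have "cinner n (K w) = 0" using n(1) by (simp flip: selfadjoint)
  then have "cinner n (w + K w) = 0" using n(2) by (simp add: cinner_add_right)
  ultimately show ?thesis by (metis pythagoras)
qed

lemma abs_min_attaining_identity_plus_finite_rank: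
  fixes K :: "'a::chilbert_space \<Rightarrow> 'a"
  assumes K: "clinear K" "continuous_on UNIV K" "finite_rank K"
    and selfadjoint: "\<And>u v. cinner (K u) v = cinner u (K v)"
  shows "abs_min_attaining (\<lambda>u. u + K u)"
  unfolding abs_min_attaining_def
proof (intro allI impI, elim conjE)
  fix M :: "'a set"
  assume M: "closed_csubspace M" "M \<noteq> {0}"
  let ?T = "\<lambda>u. u + K u"
  define N where "N = M \<inter> {u. K u = 0}"
  define W where "W = orthogonal_complement_in M N"
  have N: "closed_csubspace N" "N \<subseteq> M"
    using closed_csubspace_Int_kernel[OF M(1) K(1,2)] by (auto simp: N_def)
  have W: "csubspace W" "closed W" "W \<subseteq> M"
    using closed_csubspace_orthogonal_complement_in[OF M(1)]
    by (auto simp: W_def closed_csubspace_def orthogonal_complement_in_def)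
  have norms: "(norm (n + w))\<^sup>2 = (norm n)\<^sup>2 + (norm w)\<^sup>2"
    "(norm (?T (n + w)))\<^sup>2 = (norm n)\<^sup>2 + (norm (?T w))\<^sup>2" if "n \<in> N" "w \<in> W" for n w
    using that norm_sq_identity_plus_selfadjoint_split[OF K(1) selfadjoint, of n w]
    by (simp_all add: N_def W_def orthogonal_complement_in_def pythagoras)
  have inj: "w = 0" if "w \<in> W" "K w = 0" for w
  proof -
    have "w \<in> N" using that by (simp add: W_def N_def orthogonal_complement_in_def)
    then have "cinner w w = 0" using that(1) by (simp add: W_def orthogonal_complement_in_def)
    then show ?thesis by simp
  qed
  obtain G where G: "finite G" "range K \<subseteq> cspan G"
    using K(3) unfolding finite_rank_def by blast
  obtain E where E: "finite E" "orthonormal E" "E \<subseteq> W" "W \<subseteq> cspan E"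
    by (rule finite_orthonormal_basis_if_inj_on_subspace[OF K(1) G W(1) inj])
  have "min_attaining_on W ?T" if "W \<noteq> {0}"
  proof (rule min_attaining_on_finite_span[OF E(1,2,4) W(2)])
    show "\<exists>w\<in>W. norm w = 1" using csubspace_has_unit_vector[OF W(1) that] by metis
    show "continuous_on UNIV ?T" by (rule continuous_on_add[OF continuous_on_id K(2)])
  qed
  moreover have "clinear ?T"
    unfolding clinear_def by (simp add: clinear_add[OF K(1)] clinear_scaleC[OF K(1)] scaleC_add_right)
  moreover have "\<exists>n\<in>N. \<exists>w\<in>W. u = n + w" if "u \<in> M" for u
    using orthogonal_decomposition[OF N] M(1) that by (simp add: W_def closed_csubspace_def)
  ultimately show "min_attaining_on M ?T"
    using min_attaining_on_orthogonal_sum[of ?T N M W] N W norms M(2)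
    by (simp add: closed_csubspace_def)
qed

lemma abs_min_attaining_block_op_if_finite_rank:
  fixes C :: "'b::chilbert_space \<Rightarrow> 'a::chilbert_space"
  assumes "bounded_clinear C" "finite_rank C"
  shows "abs_min_attaining (block_op C)"
  unfolding block_op_eq[abs_def] using assms
  by (intro abs_min_attaining_identity_plus_finite_rank clinear_offdiag finite_rank_offdiag
      cinner_offdiag linear_continuous_on bounded_linear_offdiag)

section \<open>Infinite rank\<close>

fun history :: "('a list \<Rightarrow> 'a) \<Rightarrow> nat \<Rightarrow> 'a list" where
  "history f 0 = []"
| "history f (Suc n) = history f n @ [f (history f n)]"

lemma history_eq_map: "history f n = map (\<lambda>k. f (history f k)) [0..<n]"
  by (induction n) auto

lemma sequence_by_choice_from_prefixes:
  assumes "\<And>xs. \<exists>x. P xs x"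
  obtains a :: "nat \<Rightarrow> 'a" where "\<And>n. P (map a [0..<n]) (a n)"
proof -
  obtain f where f: "\<And>xs. P xs (f xs)" using assms by metis
  have "P (map (\<lambda>k. f (history f k)) [0..<n]) (f (history f n))" for n
    using f[of "history f n"] history_eq_map[of f n] by simp
  then show thesis by (rule that)
qed

lemma exists_unit_orthogonal_outside_kernel:
  fixes C :: "'b::complex_inner \<Rightarrow> 'a::complex_vector"
  assumes C: "clinear C" and infinite_rank: "\<not> finite_rank C" and G: "finite G"
  shows "\<exists>y. (\<forall>g\<in>G. cinner g y = 0) \<and> norm y = 1 \<and> C y \<noteq> 0"
proof (rule ccontr)
  assume no: "\<not> ?thesis"
  have kernel: "C y = 0" if "\<forall>g\<in>G. cinner g y = 0" for y
  proof (cases "y = 0")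
    case False
    then have "norm (sgn y) = 1" "\<forall>g\<in>G. cinner g (sgn y) = 0"
      using that by (simp_all add: norm_sgn sgn_div_norm cinner_scaleR_right)
    then have "C (sgn y) = 0" using no by blast
    then show ?thesis using False by (simp add: sgn_div_norm clinear_scaleR[OF C])
  qed (simp add: clinear_zero[OF C])
  obtain E where E: "finite E" "orthonormal E" "G \<subseteq> cspan E"
    using gram_schmidt[OF G] by blast
  have "C x \<in> cspan (C ` E)" for x
  proof -
    have "C (x - proj E x) = 0"
      using E by (intro kernel) (auto intro: cinner_cspan_diff_proj)
    then have "C x = C (proj E x)" by (simp add: clinear_diff[OF C])
    then show ?thesis using clinear_cspan_image[OF C proj_in_cspan] by metis
  qed
  then have "finite_rank C"
    unfolding finite_rank_def using E(1) by blast
  then show False using infinite_rank by blast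
qed

lemma orthogonal_sequence_if_infinite_rank:
  fixes C :: "'b::complex_inner \<Rightarrow> 'a::complex_vector" and F :: "'b \<Rightarrow> 'b set"
  assumes "clinear C" "\<not> finite_rank C" "\<And>y. finite (F y)"
  obtains y :: "nat \<Rightarrow> 'b" where "\<And>n. norm (y n) = 1" "\<And>n. C (y n) \<noteq> 0"
    "\<And>m n g. m < n \<Longrightarrow> g \<in> F (y m) \<Longrightarrow> cinner g (y n) = 0"
proof -
  define Q where "Q ys y \<longleftrightarrow> (\<forall>g\<in>\<Union>(F ` set ys). cinner g y = 0) \<and> norm y = 1 \<and> C y \<noteq> 0"
    for ys y
  have "\<exists>y. Q ys y" for ys
    unfolding Q_def using assms by (intro exists_unit_orthogonal_outside_kernel) auto
  then obtain y where "\<And>n. Q (map y [0..<n]) (y n)"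
    using sequence_by_choice_from_prefixes[of Q] by blast
  then show thesis
    by (intro that[of y]) (auto simp: Q_def)
qed

lemma block_op_test_vector:
  fixes C :: "'b::chilbert_space \<Rightarrow> 'a::chilbert_space"
  assumes "bounded_clinear C"
  shows "block_op C (scaleR t (C y), y) = (scaleR (1 + t) (C y), scaleR t (cadjoint C (C y)) + y)"
  by (simp add: clinear_scaleR[OF clinear_cadjoint[OF assms]] algebra_simps)

text \<open>The ratio \<open>\<parallel>T v\<parallel>\<^sup>2 / \<parallel>v\<parallel>\<^sup>2\<close> along \<open>v = (t C y, y)\<close> is at least \<open>1 + \<parallel>C y\<parallel>\<^sup>2\<close> at \<open>t = 0\<close> and at
  most \<open>1\<close> at \<open>t = -1\<close>, so by continuity it takes every value in between.\<close>
lemma exists_test_vector_with_ratio: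
  fixes C :: "'b::chilbert_space \<Rightarrow> 'a::chilbert_space"
  assumes C: "bounded_clinear C" "contraction C" and y: "norm y = 1"
    and \<tau>: "1 < \<tau>" "\<tau> \<le> 1 + (norm (C y))\<^sup>2"
  shows "\<exists>t. (norm (block_op C (scaleR t (C y), y)))\<^sup>2 = \<tau> * (norm (scaleR t (C y), y))\<^sup>2"
proof -
  define g where "g t = (norm (block_op C (scaleR t (C y), y)))\<^sup>2 - \<tau> * (norm (scaleR t (C y), y))\<^sup>2"
    for t
  have "continuous_on {-1..0} g"
    unfolding g_def
    by (intro continuous_intros
        linear_continuous_on[OF bounded_linear_block_op[OF C(1)], THEN continuous_on_compose2[of UNIV]])
      auto
  moreover have "0 \<le> g 0"
    using \<tau> y C(1) by (simp add: g_def norm_Pair clinear_zero[OF clinear_cadjoint])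
  moreover have "g (-1) \<le> 0"
  proof -
    let ?a = "norm (C y)" and ?A = "cadjoint C (C y)"
    have "norm ?A \<le> ?a"
      using contraction_cadjoint[OF C] by (simp add: contraction_def)
    then have "(norm ?A)\<^sup>2 \<le> ?a\<^sup>2" by (simp add: power_mono)
    moreover have "Re (cinner y ?A) = ?a\<^sup>2"
      by (simp add: cinner_cadjoint_right[OF C(1)] Re_cinner_self)
    moreover have "(norm y)\<^sup>2 = 1" using y by simp
    ultimately have "(norm (y - ?A))\<^sup>2 \<le> 1 + ?a\<^sup>2"
      using norm_diff_sq[of y ?A] zero_le_power2[of ?a] by linarith
    also have "\<dots> \<le> \<tau> * (?a\<^sup>2 + 1)"
      using \<tau>(1) mult_right_mono[of 1 \<tau> "?a\<^sup>2"] by (simp add: distrib_left)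
    finally show ?thesis
      using y block_op_test_vector[OF C(1), of "-1" y] by (simp add: g_def norm_Pair)
  qed
  ultimately obtain t where "g t = 0"
    using IVT'[of g "-1" 0 0] by auto
  then show ?thesis unfolding g_def by auto
qed

lemma test_vectors_orthogonal:
  fixes C :: "'b::chilbert_space \<Rightarrow> 'a::chilbert_space"
  assumes C: "bounded_clinear C"
    and orth: "cinner a b = 0" "cinner (cadjoint C (C a)) b = 0"
      "cinner (cadjoint C (C (cadjoint C (C a)))) b = 0"
  shows "cinner (scaleR s (C a), a) (scaleR t (C b), b) = 0"
    and "cinner (block_op C (scaleR s (C a), a)) (block_op C (scaleR t (C b), b)) = 0"
proof -
  have "cinner (C a) (C b) = 0" "cinner a (cadjoint C (C b)) = 0"
    "cinner (cadjoint C (C a)) (cadjoint C (C b)) = 0"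
    using orth by (simp_all add: cinner_cadjoint[OF C] cinner_cadjoint_right[OF C])
  then show "cinner (scaleR s (C a), a) (scaleR t (C b), b) = 0"
    "cinner (block_op C (scaleR s (C a), a)) (block_op C (scaleR t (C b), b)) = 0"
    using orth(1,2)
    by (simp_all add: clinear_scaleR[OF clinear_cadjoint[OF C]] cinner_Pair cinner_scaleR_left
        cinner_scaleR_right cinner_add_left cinner_add_right)
qed

context
  fixes T :: "'a::complex_inner \<Rightarrow> 'b::complex_inner" and v :: "nat \<Rightarrow> 'a" and \<tau> :: "nat \<Rightarrow> real"
  assumes T: "clinear T" "continuous_on UNIV T"
    and orthogonal: "\<And>m n. m \<noteq> n \<Longrightarrow> cinner (v m) (v n) = 0 \<and> cinner (T (v m)) (T (v n)) = 0"
    and ratio: "\<And>n. (norm (T (v n)))\<^sup>2 = \<tau> n * (norm (v n))\<^sup>2"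
begin

lemma cinner_image_orthogonal_family:
  assumes "x \<in> closure (cspan (range v))"
  shows "cinner (T x) (T (v n)) = \<tau> n * cinner x (v n)"
proof -
  let ?b = "scaleC (complex_of_real (\<tau> n)) (v n)"
  have "cinner (T w) (T (v n)) = cinner w ?b" if w: "w \<in> range v" for w
  proof (cases "w = v n")
    case True
    then show ?thesis by (simp add: cinner_self ratio cinner_scaleC_right)
  next
    case False
    then obtain m where "w = v m" "m \<noteq> n" using w by auto
    then show ?thesis
      using orthogonal[of m n] by (simp add: cinner_scaleC_right)
  qed
  then have "cspan (range v) \<subseteq> {x. cinner (T x) (T (v n)) = cinner x ?b}"
    using cinner_clinear_cspan[OF T(1)] by blast
  moreover have "closed {x. cinner (T x) (T (v n)) = cinner x ?b}"
    by (rule closed_Collect_eq[OF continuous_on_cinner[OF T(2) continuous_on_const]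
          continuous_on_cinner[OF continuous_on_id continuous_on_const]])
  ultimately have "cinner (T x) (T (v n)) = cinner x ?b"
    using closure_minimal assms by blast
  then show ?thesis by (simp add: cinner_scaleC_right)
qed

lemma norm_le_norm_image_orthogonal_family:
  assumes expanding: "\<And>n. 1 \<le> \<tau> n" and x: "x \<in> closure (cspan (range v))"
  shows "norm x \<le> norm (T x)"
proof -
  have "(norm y)\<^sup>2 \<le> (norm (T y))\<^sup>2" if y: "y \<in> cspan (range v)" for y
  proof -
    obtain F c where y: "y = (\<Sum>w\<in>F. scaleC (c w) w)" "finite F" "F \<subseteq> range v"
      using y unfolding cspan_def by blast
    have orth_terms: "cinner (scaleC (c u) u) (scaleC (c w) w) = 0"
      "cinner (scaleC (c u) (T u)) (scaleC (c w) (T w)) = 0"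
      if uw: "u \<in> F" "w \<in> F" "u \<noteq> w" for u w
    proof -
      obtain m m' where "u = v m" "w = v m'" "m \<noteq> m'" using uw y(3) by blast
      then show "cinner (scaleC (c u) u) (scaleC (c w) w) = 0"
        "cinner (scaleC (c u) (T u)) (scaleC (c w) (T w)) = 0"
        using orthogonal[of m m'] by (simp_all add: cinner_scaleC_left cinner_scaleC_right)
    qed
    have "(norm y)\<^sup>2 = (\<Sum>w\<in>F. (norm (scaleC (c w) w))\<^sup>2)"
      using norm_sum_orthogonal[OF y(2), of "\<lambda>w. scaleC (c w) w"] orth_terms(1)
      by (simp add: y(1))
    moreover have "(norm (T y))\<^sup>2 = (\<Sum>w\<in>F. (norm (scaleC (c w) (T w)))\<^sup>2)"
      using norm_sum_orthogonal[OF y(2), of "\<lambda>w. scaleC (c w) (T w)"] orth_terms(2)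
      by (simp add: y(1) clinear_sum[OF T(1)] clinear_scaleC[OF T(1)])
    moreover have "(norm (scaleC (c w) w))\<^sup>2 \<le> (norm (scaleC (c w) (T w)))\<^sup>2" if w: "w \<in> F" for w
    proof -
      obtain n where "w = v n" using w y(3) by blast
      then have "(norm w)\<^sup>2 \<le> (norm (T w))\<^sup>2"
        using ratio[of n] expanding[of n] by (simp add: mult_le_cancel_right1)
      then show ?thesis by (simp add: norm_scaleC power_mult_distrib mult_left_mono)
    qed
    ultimately show ?thesis by (simp add: sum_mono)
  qed
  then have "cspan (range v) \<subseteq> {x. (norm x)\<^sup>2 \<le> (norm (T x))\<^sup>2}" by blast
  moreover have "closed {x. (norm x)\<^sup>2 \<le> (norm (T x))\<^sup>2}"
    by (rule closed_Collect_le[OF continuous_on_power[OF continuous_on_norm[OF continuous_on_id]]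
          continuous_on_power[OF continuous_on_norm[OF T(2)]]])
  ultimately have "(norm x)\<^sup>2 \<le> (norm (T x))\<^sup>2"
    using closure_minimal x by blast
  then show ?thesis by (rule power2_le_imp_le) simp
qed

lemma norm_image_sgn_orthogonal_family:
  assumes "v n \<noteq> 0"
  shows "(norm (T (sgn (v n))))\<^sup>2 = \<tau> n"
proof -
  have "norm (T (sgn (v n))) = norm (T (v n)) / norm (v n)"
    by (simp add: sgn_div_norm clinear_scaleR[OF T(1)] divide_inverse_commute)
  then show ?thesis using assms by (simp add: power_divide ratio)
qed

lemma not_min_attaining_on_orthogonal_family:
  assumes nonzero: "\<And>n. v n \<noteq> 0" and \<tau>: "\<And>n. 1 < \<tau> n" "\<tau> \<longlonglongrightarrow> 1"
  shows "\<not> min_attaining_on (closure (cspan (range v))) T"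
proof
  let ?M = "closure (cspan (range v))"
  assume "min_attaining_on ?M T"
  then obtain x where x: "x \<in> ?M" "norm x = 1" "norm (T x) = min_modulus_on ?M T"
    unfolding min_attaining_on_def by blast
  have M: "csubspace ?M"
    using closed_csubspace_closure[OF csubspace_cspan] by (simp add: closed_csubspace_def)
  have v_in_M: "v n \<in> ?M" for n
    using closure_subset cspan_base[of "v n" "range v"] by blast
  have expanding: "norm z \<le> norm (T z)" if "z \<in> ?M" for z
    using norm_le_norm_image_orthogonal_family[OF less_imp_le[OF \<tau>(1)] that] .
  have "norm (T x) \<le> norm (T (sgn (v n)))" for n
    using min_modulus_on_le[of "sgn (v n)" ?M T] csubspace_sgn[OF M v_in_M] nonzero
    by (simp add: x(3) norm_sgn)
  then have "(norm (T x))\<^sup>2 \<le> \<tau> n" for n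
    using norm_image_sgn_orthogonal_family[OF nonzero[of n]] by (metis norm_ge_zero power_mono)
  then have "(norm (T x))\<^sup>2 \<le> 1"
    using \<tau>(2) by (intro LIMSEQ_le_const) auto
  then have "norm (T x) \<le> 1" by (simp add: abs_square_le_1)
  then have "norm (T x) = norm x"
    using expanding[OF x(1)] x(2) by linarith
  have "cinner (v n) x = 0" for n
  proof -
    have "cinner x (v n) = \<tau> n * cinner x (v n)"
      using cinner_eq_if_norm_eq_on_expanding[OF T(1) M expanding x(1) \<open>norm (T x) = norm x\<close>]
        v_in_M cinner_image_orthogonal_family[OF x(1)] by simp
    then have "cinner x (v n) = 0" using \<tau>(1)[of n] by (auto simp: algebra_simps)
    then show ?thesis using cinner_commute[of "v n" x] by simp
  qed
  then have "x = 0"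
    using eq_zero_if_orthogonal_closure_cspan[OF x(1)] by blast
  then show False using x(2) by simp
qed

end

lemma seq_above_one_tendsto_one:
  fixes a :: "nat \<Rightarrow> real"
  assumes "\<And>n. 0 < a n"
  obtains \<tau> where "\<And>n. 1 < \<tau> n" "\<And>n. \<tau> n \<le> 1 + a n" "\<tau> \<longlonglongrightarrow> 1"
proof
  let ?\<tau> = "\<lambda>n. 1 + min (a n) (1 / (real n + 1))"
  show "1 < ?\<tau> n" "?\<tau> n \<le> 1 + a n" for n
    using assms[of n] by auto
  show "?\<tau> \<longlonglongrightarrow> 1"
  proof (rule real_tendsto_sandwich[of "\<lambda>n. 1" _ _ "\<lambda>n. 1 + 1 / (real n + 1)"])
    show "(\<lambda>n. 1 + 1 / (real n + 1)) \<longlonglongrightarrow> 1"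
      using tendsto_add[OF tendsto_const LIMSEQ_inverse_real_plus_one, of 1] by simp
  qed (auto simp: less_imp_le assms)
qed

lemma not_abs_min_attaining_block_op_if_infinite_rank:
  fixes C :: "'b::chilbert_space \<Rightarrow> 'a::chilbert_space"
  assumes C: "bounded_clinear C" "contraction C" and infinite_rank: "\<not> finite_rank C"
  shows "\<not> abs_min_attaining (block_op C)"
proof
  assume AM: "abs_min_attaining (block_op C)"
  let ?A = "\<lambda>z. cadjoint C (C z)"
  obtain y :: "nat \<Rightarrow> 'b" where y: "\<And>n. norm (y n) = 1" "\<And>n. C (y n) \<noteq> 0"
    "\<And>m n g. m < n \<Longrightarrow> g \<in> {y m, ?A (y m), ?A (?A (y m))} \<Longrightarrow> cinner g (y n) = 0"
    using orthogonal_sequence_if_infinite_rank[of C "\<lambda>z. {z, ?A z, ?A (?A z)}"] C(1) infinite_rank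
    unfolding bounded_clinear_def by blast
  obtain \<tau> where \<tau>: "\<And>n. 1 < \<tau> n" "\<And>n. \<tau> n \<le> 1 + (norm (C (y n)))\<^sup>2" "\<tau> \<longlonglongrightarrow> 1"
    using seq_above_one_tendsto_one[of "\<lambda>n. (norm (C (y n)))\<^sup>2"] y(2) by auto
  obtain t where t: "\<And>n. (norm (block_op C (scaleR (t n) (C (y n)), y n)))\<^sup>2
      = \<tau> n * (norm (scaleR (t n) (C (y n)), y n))\<^sup>2"
    using exists_test_vector_with_ratio[OF C y(1) \<tau>(1,2)] by metis
  define v where "v n = (scaleR (t n) (C (y n)), y n)" for n
  have "cinner (v m) (v n) = 0 \<and> cinner (block_op C (v m)) (block_op C (v n)) = 0"
    if "m \<noteq> n" for m n
  proof (cases "m < n")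
    case True
    then show ?thesis using test_vectors_orthogonal[OF C(1)] y(3) by (simp add: v_def)
  next
    case False
    then have "n < m" using that by simp
    then show ?thesis using test_vectors_orthogonal[OF C(1)] y(3) cinner_commute
      by (metis v_def complex_cnj_zero insertCI)
  qed
  moreover have "v n \<noteq> 0" for n using y(1)[of n] by (auto simp: v_def prod_eq_iff)
  ultimately have "\<not> min_attaining_on (closure (cspan (range v))) (block_op C)"
    using not_min_attaining_on_orthogonal_family[OF clinear_block_op[OF C(1)]
        linear_continuous_on[OF bounded_linear_block_op[OF C(1)]]] t \<tau>(1) \<open>\<tau> \<longlonglongrightarrow> 1\<close>
    by (simp add: v_def)
  moreover have "closure (cspan (range v)) \<noteq> {0}"
    using closure_subset cspan_base[of "v 0" "range v"] \<open>v 0 \<noteq> 0\<close> by blast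
  ultimately show False
    using AM closed_csubspace_closure[OF csubspace_cspan] unfolding abs_min_attaining_def by blast
qed

theorem corollary4p13:
  fixes C :: "'b::chilbert_space \<Rightarrow> 'a::chilbert_space"
  assumes "separable_space TYPE('a)" and "infinite_dimensional TYPE('a)"
    and "separable_space TYPE('b)" and "infinite_dimensional TYPE('b)"
    and "bounded_clinear C" and "contraction C"
  shows "abs_min_attaining (\<lambda>(x::'a, y::'b). (x + C y, cadjoint C x + y))
         \<longleftrightarrow> finite_rank C"
proof -
  show ?thesis
    using abs_min_attaining_block_op_if_finite_rank[OF assms(5)]
      not_abs_min_attaining_block_op_if_infinite_rank[OF assms(5,6)]
    unfolding block_op_def by blast
qed

end
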